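(* Let $(N,+,* )$ be a nilpotent ring and let $\circ$ be its adjoint operation $x\circ y=x+y+x*y$. Let $B,C$ be subgroups of $(N,\circ)$ such that every $x\in N$ can be written uniquely as $x=x_1\circ x_2$ with $x_1\in B$, $x_2\in C$, and define $x\bullet y=x_1\circ y\circ x_2$; then $(N,+,\bullet)$ is a left brace. Let $r(x,y)=(\sigma_x(y),\tau_y(x))$ be the Yang–Baxter map of $(N,+,\bullet)$ and let $X\subseteq N$ be such that $(X,r)$ is a solution of the set-theoretic Yang–Baxter equation. Let $f:X\to X$ be $\mathcal G(X,r)$-equivariant and let $g:X\to X$ satisfy $g(x)*c=c*g(x)$ for all $x\in X$, $c\in C$. Define $k_1(x)=f(x)*g(x)$ and $k_2(x)=f(x)+f(x)*g(x)$, and assume $k_1(X),k_2(X)\subseteq X$. For $i\in\{1,2\}$, if $f(x)*g(\tau_{k_i(y)}(x))=f(x)*g(\tau_y(x))$ for all $x,y\in X$, then $k_i$ is a reflection of $(X,r)$.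
   Context: A (left) brace is a triple $(B,+,\circ)$ with $(B,+)$ abelian group, $(B,\circ)$ group, and $x\circ(y+z)=x\circ y+x\circ z-x$. For a nilpotent (associative, not necessarily unital) ring, $(N,+,\circ)$ with the adjoint operation is a brace. The Yang–Baxter map of a brace $(N,+,\bullet)$ is $r(x,y)=(\sigma_x(y),\tau_y(x))$ with $\sigma_x(y)=x\bullet y-x$ and $\tau_y(x)=(\sigma_x(y))^{-1}\bullet x-(\sigma_x(y))^{-1}$, inverses taken in $(N,\bullet)$. For $X\subseteq N$, $(X,r)$ is a solution of the set-theoretic Yang–Baxter equation if $r(X\times X)\subseteq X\times X$ and $(\mathrm{id}\times r)(r\times\mathrm{id})(\mathrm{id}\times r)=(r\times\mathrm{id})(\mathrm{id}\times r)(r\times\mathrm{id})$ on $X^3$. A map $k:X\to X$ is a reflection of $(X,r)$ if $r(\mathrm{id}\times k)r(\mathrm{id}\times k)=(\mathrm{id}\times k)r(\mathrm{id}\times k)r$ as maps $X\times X\to X\times X$; $k$ is $\mathcal G(X,r)$-equivariant if $k\sigma_x=\sigma_x k$ on $X$ for every $x\in X$. *)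

theory Defs
  imports Main
begin

fun mprod :: "'a::ring list \<Rightarrow> 'a" where
  "mprod [] = 0"
| "mprod [x] = x"
| "mprod (x # y # xs) = x * mprod (y # xs)"

definition nilpotent_ring :: "'a::ring itself \<Rightarrow> bool" where
  "nilpotent_ring _ \<longleftrightarrow> (\<exists>n\<ge>1. \<forall>xs::'a list. length xs = n \<longrightarrow> mprod xs = 0)"

definition adj :: "'a::ring \<Rightarrow> 'a \<Rightarrow> 'a" where
  "adj x y = x + y + x * y"

definition adj_inv :: "'a::ring \<Rightarrow> 'a" where
  "adj_inv x = (THE y. adj x y = 0 \<and> adj y x = 0)"

definition adj_subgroup :: "'a::ring set \<Rightarrow> bool" where
  "adj_subgroup H \<longleftrightarrow> 0 \<in> H \<and> (\<forall>x\<in>H. \<forall>y\<in>H. adj x y \<in> H) \<and> (\<forall>x\<in>H. adj_inv x \<in> H)"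

definition exact_factorization :: "'a::ring set \<Rightarrow> 'a set \<Rightarrow> bool" where
  "exact_factorization B C \<longleftrightarrow> (\<forall>x. \<exists>!p. fst p \<in> B \<and> snd p \<in> C \<and> x = adj (fst p) (snd p))"

definition fact_pair :: "'a::ring set \<Rightarrow> 'a set \<Rightarrow> 'a \<Rightarrow> 'a \<times> 'a" where
  "fact_pair B C x = (THE p. fst p \<in> B \<and> snd p \<in> C \<and> x = adj (fst p) (snd p))"

definition bul :: "'a::ring set \<Rightarrow> 'a set \<Rightarrow> 'a \<Rightarrow> 'a \<Rightarrow> 'a" where
  "bul B C x y = adj (adj (fst (fact_pair B C x)) y) (snd (fact_pair B C x))"

definition bul_inv :: "'a::ring set \<Rightarrow> 'a set \<Rightarrow> 'a \<Rightarrow> 'a" where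
  "bul_inv B C x = (THE z. bul B C x z = 0 \<and> bul B C z x = 0)"

definition sig :: "'a::ring set \<Rightarrow> 'a set \<Rightarrow> 'a \<Rightarrow> 'a \<Rightarrow> 'a" where
  "sig B C x y = bul B C x y - x"

definition tau :: "'a::ring set \<Rightarrow> 'a set \<Rightarrow> 'a \<Rightarrow> 'a \<Rightarrow> 'a" where
  "tau B C y x = bul B C (bul_inv B C (sig B C x y)) x - bul_inv B C (sig B C x y)"

definition ybr :: "'a::ring set \<Rightarrow> 'a set \<Rightarrow> 'a \<times> 'a \<Rightarrow> 'a \<times> 'a" where
  "ybr B C p = (sig B C (fst p) (snd p), tau B C (snd p) (fst p))"

definition is_solution :: "('a \<times> 'a \<Rightarrow> 'a \<times> 'a) \<Rightarrow> 'a set \<Rightarrow> bool" where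
  "is_solution r X \<longleftrightarrow> r ` (X \<times> X) \<subseteq> X \<times> X \<and>
    (\<forall>x\<in>X. \<forall>y\<in>X. \<forall>z\<in>X.
       (let r12 = (\<lambda>(a,b,c). (fst (r (a,b)), snd (r (a,b)), c));
            r23 = (\<lambda>(a,b,c). (a, fst (r (b,c)), snd (r (b,c))))
        in r23 (r12 (r23 (x,y,z))) = r12 (r23 (r12 (x,y,z)))))"

definition is_reflection :: "('a \<times> 'a \<Rightarrow> 'a \<times> 'a) \<Rightarrow> 'a set \<Rightarrow> ('a \<Rightarrow> 'a) \<Rightarrow> bool" where
  "is_reflection r X k \<longleftrightarrow>
    (\<forall>x\<in>X. \<forall>y\<in>X. let idk = (\<lambda>(a,b). (a, k b)) in
       r (idk (r (idk (x,y)))) = idk (r (idk (r (x,y)))))"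

end

theory Submission
  imports Defs
begin

text \<open>Writing \<open>x = x\<^sub>1 \<circ> x\<^sub>2\<close>, the map \<open>\<sigma>\<^sub>x(y) = x\<^sub>1 \<circ> y \<circ> x\<^sub>2 - x\<close> is
  \<open>y \<mapsto> (1 + x\<^sub>1) y (1 + x\<^sub>2)\<close>: it is additive, and right multiplication by an element
  commuting with \<open>C\<close> passes through it. Hence, for \<open>k(x) = \<Phi>(f(x), g(x))\<close> with
  \<open>\<Phi>(p, q) = p q\<close> or \<open>p + p q\<close>, equivariance of \<open>f\<close> gives
  \<open>\<sigma>\<^sub>v(k w) = \<Phi>(f(\<sigma>\<^sub>v w), g w)\<close>. Together with the solution identities
  \<open>\<sigma>\<^bsub>\<sigma>\<^sub>x(y)\<^esub>(\<tau>\<^sub>y x) = x\<close> and \<open>\<tau>\<^bsub>\<tau>\<^sub>y(x)\<^esub>(\<sigma>\<^sub>x y) = y\<close>, both sides of the reflection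
  equation reduce to expressions that differ only in the argument of \<open>g\<close>, and the
  hypothesis on \<open>g \<circ> \<tau>\<close> identifies them.\<close>

definition sandwich :: "'a::ring \<Rightarrow> 'a \<Rightarrow> 'a \<Rightarrow> 'a" where
  "sandwich a c w = w + a * w + w * c + a * w * c"

lemma sandwich_sandwich: "sandwich a c (sandwich a' c' w) = sandwich (adj a a') (adj c' c) w"
  by (simp add: sandwich_def adj_def algebra_simps)

lemma sandwich_0_0 [simp]: "sandwich 0 0 w = w"
  by (simp add: sandwich_def)

lemma sandwich_add: "sandwich a c (p + q) = sandwich a c p + sandwich a c q"
  by (simp add: sandwich_def algebra_simps)

lemma sandwich_mult_right: "q * c = c * q \<Longrightarrow> sandwich a c (p * q) = sandwich a c p * q"
  by (simp add: sandwich_def algebra_simps)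

lemma adj_assoc: "adj (adj a b) c = adj a (adj b (c::'a::ring))"
  by (simp add: adj_def algebra_simps)

lemma adj_0_left [simp]: "adj 0 x = x" and adj_0_right [simp]: "adj x 0 = x"
  by (simp_all add: adj_def)

lemma mprod_Cons: "xs \<noteq> [] \<Longrightarrow> mprod (x # xs) = x * mprod xs"
  by (cases xs) simp_all

fun neg_geometric :: "'a::ring \<Rightarrow> nat \<Rightarrow> 'a" where
  "neg_geometric x 0 = 0"
| "neg_geometric x (Suc m) = - x - x * neg_geometric x m"

lemma adj_neg_geometric: "adj x (neg_geometric x m) = mprod (replicate m (- x) @ [x])"
proof (induction m)
  case (Suc m)
  have "adj x (neg_geometric x (Suc m)) = - x * adj x (neg_geometric x m)"
    by (simp add: adj_def algebra_simps)
  then show ?case by (simp add: Suc mprod_Cons)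
qed (simp add: adj_def)

lemma adj_right_inverse_exists:
  assumes "nilpotent_ring TYPE('a::ring)"
  shows "\<exists>y. adj (x::'a) y = 0"
proof -
  obtain n where "n \<ge> 1" and n: "\<forall>xs::'a list. length xs = n \<longrightarrow> mprod xs = 0"
    using assms unfolding nilpotent_ring_def by blast
  then have "adj x (neg_geometric x (n - 1)) = 0"
    by (simp add: adj_neg_geometric)
  then show ?thesis ..
qed

text \<open>In the monoid \<open>(N, \<circ>, 0)\<close> right inverses are two-sided once every element has one.\<close>

lemma adj_inverse_exists:
  assumes nil: "nilpotent_ring TYPE('a::ring)"
  shows "\<exists>y. adj (x::'a) y = 0 \<and> adj y x = 0"
proof -
  obtain y where y: "adj x y = 0" using adj_right_inverse_exists[OF nil] by blast
  obtain z where z: "adj y z = 0" using adj_right_inverse_exists[OF nil] by blast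
  have "x = adj (adj x y) z" using z by (simp add: adj_assoc)
  then have "x = z" using y by simp
  with y z show ?thesis by blast
qed

lemma adj_inv:
  assumes nil: "nilpotent_ring TYPE('a::ring)"
  shows "adj (x::'a) (adj_inv x) = 0 \<and> adj (adj_inv x) x = 0"
proof -
  obtain y where y: "adj x y = 0 \<and> adj y x = 0" using adj_inverse_exists[OF nil] by blast
  have "y' = y" if "adj x y' = 0 \<and> adj y' x = 0" for y'
  proof -
    have "y' = adj (adj y x) y'" using y by simp
    also have "\<dots> = y" using that by (simp add: adj_assoc)
    finally show ?thesis .
  qed
  with y have "\<exists>!y. adj x y = 0 \<and> adj y x = 0" by blast
  then show ?thesis unfolding adj_inv_def by (rule theI')
qed

locale adj_factorization =
  fixes B C :: "'a::ring set"
  assumes nil: "nilpotent_ring TYPE('a)" and subB: "adj_subgroup B" and subC: "adj_subgroup C"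
    and fact: "exact_factorization B C"
begin

lemma adj_adj_inv [simp]: "adj (x::'a) (adj_inv x) = 0"
  and adj_inv_adj [simp]: "adj (adj_inv x) x = 0"
  using adj_inv[OF nil] by blast+

lemma adj_cancel_left [simp]: "adj (x::'a) (adj (adj_inv x) y) = y"
  and adj_inv_cancel_left [simp]: "adj (adj_inv x) (adj x y) = y"
  by (simp_all flip: adj_assoc)

lemma fact_pair:
  "fst (fact_pair B C x) \<in> B" "snd (fact_pair B C x) \<in> C"
  "x = adj (fst (fact_pair B C x)) (snd (fact_pair B C x))"
  using theI'[OF fact[unfolded exact_factorization_def, rule_format, of x]]
  unfolding fact_pair_def by blast+

lemma fact_pair_adj: "b \<in> B \<Longrightarrow> c \<in> C \<Longrightarrow> fact_pair B C (adj b c) = (b, c)"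
  unfolding fact_pair_def
  by (rule the1_equality[OF fact[unfolded exact_factorization_def, rule_format]]) auto

lemma sig_eq_sandwich: "sig B C v w = sandwich (fst (fact_pair B C v)) (snd (fact_pair B C v)) w"
proof -
  obtain a c where ac: "fact_pair B C v = (a, c)" by (cases "fact_pair B C v")
  then have "v = adj a c" using fact_pair(3)[of v] by simp
  then have "sig B C v w = adj (adj a w) c - adj a c" unfolding sig_def bul_def ac by simp
  then show ?thesis by (simp add: ac sandwich_def adj_def algebra_simps)
qed

lemma fact_pair_bul_inv:
  "fact_pair B C (bul_inv B C v) = (adj_inv (fst (fact_pair B C v)), adj_inv (snd (fact_pair B C v)))"
proof -
  obtain a c where ac: "fact_pair B C v = (a, c)" by (cases "fact_pair B C v")
  then have a: "a \<in> B" and c: "c \<in> C" using fact_pair[of v] by auto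
  define w where "w = adj (adj_inv a) (adj_inv c)"
  have "adj_inv a \<in> B" "adj_inv c \<in> C"
    using subB subC a c unfolding adj_subgroup_def by auto
  then have fw: "fact_pair B C w = (adj_inv a, adj_inv c)"
    unfolding w_def by (rule fact_pair_adj)
  have "bul_inv B C v = w" unfolding bul_inv_def
  proof (rule the_equality)
    have "v = adj a c" using fact_pair(3)[of v] ac by simp
    then show "bul B C v w = 0 \<and> bul B C w v = 0"
      unfolding bul_def ac fw by (simp add: adj_assoc w_def)
  next
    fix z assume "bul B C v z = 0 \<and> bul B C z v = 0"
    then have "adj (adj a z) c = 0" unfolding bul_def ac by simp
    then have "adj (adj (adj a z) c) (adj_inv c) = adj_inv c" by simp
    then have "adj a z = adj_inv c" by (simp add: adj_assoc)
    then show "z = w" unfolding w_def by (metis adj_inv_cancel_left)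
  qed
  then show ?thesis using ac fw by simp
qed

lemma sig_sig_bul_inv: "sig B C v (sig B C (bul_inv B C v) z) = z"
  and sig_bul_inv_sig: "sig B C (bul_inv B C v) (sig B C v z) = z"
  unfolding sig_eq_sandwich fact_pair_bul_inv sandwich_sandwich by simp_all

lemma sig_add: "sig B C v (p + q) = sig B C v p + sig B C v q"
  unfolding sig_eq_sandwich by (rule sandwich_add)

lemma sig_mult_right: "\<forall>c\<in>C. q * c = c * q \<Longrightarrow> sig B C v (p * q) = sig B C v p * q"
  unfolding sig_eq_sandwich using fact_pair(2) sandwich_mult_right by blast

lemma tau_eq_sig: "tau B C y x = sig B C (bul_inv B C (sig B C x y)) x"
  unfolding tau_def sig_def ..

lemma sig_sig_tau: "sig B C (sig B C x y) (tau B C y x) = x"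
  unfolding tau_eq_sig sig_sig_bul_inv ..

lemma tau_tau_sig: "tau B C (tau B C y x) (sig B C x y) = y"
  unfolding tau_eq_sig[of "tau B C y x"] sig_sig_tau sig_bul_inv_sig ..

end

locale equivariant_reflection_data = adj_factorization B C
  for B C :: "'a::ring set" +
  fixes X :: "'a set" and f g :: "'a \<Rightarrow> 'a" and \<Phi> :: "'a \<Rightarrow> 'a \<Rightarrow> 'a"
  assumes sol: "is_solution (ybr B C) X"
    and f_equiv: "\<forall>x\<in>X. \<forall>y\<in>X. f (sig B C x y) = sig B C x (f y)"
    and g_comm: "\<forall>x\<in>X. \<forall>c\<in>C. g x * c = c * g x"
    and kX: "\<forall>x\<in>X. \<Phi> (f x) (g x) \<in> X"
    and sig_\<Phi>: "\<forall>c\<in>C. q * c = c * q \<Longrightarrow> sig B C v (\<Phi> p q) = \<Phi> (sig B C v p) q"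
    and \<Phi>_cong: "p * q = p * q' \<Longrightarrow> \<Phi> p q = \<Phi> p q'"
begin

abbreviation k :: "'a \<Rightarrow> 'a" where
  "k x \<equiv> \<Phi> (f x) (g x)"

lemma sig_tau_closed: "x \<in> X \<Longrightarrow> y \<in> X \<Longrightarrow> sig B C x y \<in> X \<and> tau B C y x \<in> X"
proof -
  assume "x \<in> X" "y \<in> X"
  then have "ybr B C (x, y) \<in> X \<times> X" using sol unfolding is_solution_def by blast
  then show ?thesis unfolding ybr_def by simp
qed

lemma sig_k: "v \<in> X \<Longrightarrow> w \<in> X \<Longrightarrow> sig B C v (k w) = \<Phi> (f (sig B C v w)) (g w)"
  using sig_\<Phi> g_comm f_equiv by simp

lemma sig_k_tau: "x \<in> X \<Longrightarrow> y \<in> X \<Longrightarrow> sig B C (sig B C x y) (k (tau B C y x)) = \<Phi> (f x) (g (tau B C y x))"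
  using sig_k sig_tau_closed sig_sig_tau by metis

lemma reflection:
  assumes hyp: "\<forall>x\<in>X. \<forall>y\<in>X. f x * g (tau B C (k y) x) = f x * g (tau B C y x)"
  shows "is_reflection (ybr B C) X k"
  unfolding is_reflection_def Let_def
proof (intro ballI)
  fix x y assume x: "x \<in> X" and y: "y \<in> X"
  define s t where "s = sig B C x y" and "t = tau B C y x"
  define s' t' where "s' = sig B C x (k y)" and "t' = tau B C (k y) x"
  define a b where "a = sig B C s (k t)" and "b = tau B C (k t) s"
  have s: "s \<in> X" and t: "t \<in> X" using sig_tau_closed[OF x y] by (simp_all add: s_def t_def)
  have "k y \<in> X" using kX y by blast
  then have s': "s' \<in> X" and t': "t' \<in> X"
    using sig_tau_closed[OF x] by (simp_all add: s'_def t'_def)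
  have "k t \<in> X" using kX t by blast
  then have a: "a \<in> X" and b: "b \<in> X"
    using sig_tau_closed[OF s] by (simp_all add: a_def b_def)
  define D where "D = sig B C (bul_inv B C a)"
  have first: "sig B C s' (k t') = a"
    using sig_k_tau[OF x y] sig_k_tau[OF x \<open>k y \<in> X\<close>] hyp x y \<Phi>_cong
    unfolding a_def s_def t_def s'_def t'_def by metis
  have b_D: "b = D s" unfolding b_def D_def tau_eq_sig a_def ..
  have "f s = f (sig B C a b)" using sig_sig_bul_inv b_D D_def by simp
  then have f_b: "f b = D (f s)" using f_equiv a b sig_bul_inv_sig D_def by simp
  have "s' = \<Phi> (f s) (g y)" unfolding s'_def s_def using sig_k x y .
  then have second: "tau B C (k t') s' = \<Phi> (f b) (g y)"
    unfolding tau_eq_sig first f_b D_def using sig_\<Phi> g_comm y by simp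
  have "tau B C t s = y" unfolding s_def t_def tau_tau_sig ..
  then have "f s * g b = f s * g y" using hyp s t b_def by metis
  then have "f b * g b = f b * g y"
    unfolding f_b D_def using sig_mult_right g_comm b y by metis
  then have "\<Phi> (f b) (g y) = k b" using \<Phi>_cong by metis
  with first second show "ybr B C (case ybr B C (case (x, y) of (a, b) \<Rightarrow> (a, k b)) of (a, b) \<Rightarrow> (a, k b)) =
      (case ybr B C (case ybr B C (x, y) of (a, b) \<Rightarrow> (a, k b)) of (a, b) \<Rightarrow> (a, k b))"
    unfolding ybr_def by (simp add: s_def t_def s'_def t'_def a_def b_def)
qed

end

theorem mainTheorem6:
  fixes B C X :: "'a::ring set" and f g :: "'a \<Rightarrow> 'a"
  assumes nil: "nilpotent_ring TYPE('a)"
    and subB: "adj_subgroup B" and subC: "adj_subgroup C"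
    and fact: "exact_factorization B C"
    and sol: "is_solution (ybr B C) X"
    and fX: "\<forall>x\<in>X. f x \<in> X"
    and f_equiv: "\<forall>x\<in>X. \<forall>y\<in>X. f (sig B C x y) = sig B C x (f y)"
    and gX: "\<forall>x\<in>X. g x \<in> X"
    and g_comm: "\<forall>x\<in>X. \<forall>c\<in>C. g x * c = c * g x"
    and k1X: "\<forall>x\<in>X. f x * g x \<in> X"
    and k2X: "\<forall>x\<in>X. f x + f x * g x \<in> X"
  shows "((\<forall>x\<in>X. \<forall>y\<in>X. f x * g (tau B C (f y * g y) x) = f x * g (tau B C y x))
            \<longrightarrow> is_reflection (ybr B C) X (\<lambda>x. f x * g x))
       \<and> ((\<forall>x\<in>X. \<forall>y\<in>X. f x * g (tau B C (f y + f y * g y) x) = f x * g (tau B C y x))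
            \<longrightarrow> is_reflection (ybr B C) X (\<lambda>x. f x + f x * g x))"
proof -
  interpret adj_factorization B C using nil subB subC fact by unfold_locales
  interpret k\<^sub>1: equivariant_reflection_data B C X f g "\<lambda>p q. p * q"
    using sol f_equiv g_comm k1X sig_mult_right by unfold_locales auto
  interpret k\<^sub>2: equivariant_reflection_data B C X f g "\<lambda>p q. p + p * q"
    using sol f_equiv g_comm k2X sig_mult_right sig_add by unfold_locales auto
  show ?thesis using k\<^sub>1.reflection k\<^sub>2.reflection by blast
qed

end
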